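(* Let $n \geq 3$ and let $\Omega = \bigcap_{m=0}^q \{u_m \leq 0\} \subset \mathbb{R}^n$ be a compact convex polytope with non-empty interior satisfying the standing assumptions described in the context. Then there exists a constant $\Lambda > 1$ with the following property: whenever $x \in \Omega$ and $a_0,\dots,a_q$ are nonnegative real numbers such that $a_i = 0$ for all $0 \leq i \leq q$ with $u_i(x) \leq -2\Lambda^{-1}$, we have \[\sum_{i=0}^q a_i \leq \Lambda \, \Big| \sum_{i=0}^q a_i N_i \Big|.\]
   Context: Here $u_0,\dots,u_q$ are non-constant linear (affine) functions on $\mathbb{R}^n$ and $\Omega = \bigcap_{m=0}^q\{u_m\le 0\}$ is compact, convex, with non-empty interior. Standing assumptions: (a) for each $k$, the set $\{u_k>0\}\cap\bigcap_{m\neq k}\{u_m\le 0\}$ is non-empty; (b) the Euclidean gradient of each $u_k$ is a unit vector $N_k\in S^{n-1}$; (c) for $0\le j<k\le q$, if there exists $x\in\Omega$ with $u_j(x)=u_k(x)=0$, then $\langle N_j,N_k\rangle\le 0$. $|\cdot|$ denotes the Euclidean norm. *)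

theory Defs
  imports "HOL-Analysis.Analysis"
begin

end

theory Submission
  imports Defs
begin

text \<open>If \<open>cball z r \<subseteq> \<Omega>\<close>, then \<open>u\<^sub>i(z) \<le> -r\<close> for
  every \<open>i\<close>, so each normal \<open>N\<^sub>i\<close> with \<open>u\<^sub>i(x) > -r/2\<close> satisfies \<open>N\<^sub>i \<bullet> (x - z) \<ge> r/2\<close>.
  Pairing \<open>\<Sum> a\<^sub>i N\<^sub>i\<close> with \<open>x - z\<close> then gives \<open>(r/2) \<Sum> a\<^sub>i \<le> |\<Sum> a\<^sub>i N\<^sub>i| |x - z|\<close>, and
  \<open>|x - z|\<close> is bounded on \<open>\<Omega>\<close>.\<close>

lemma inner_le_neg_radius_if_cball_subset_halfspace:
  fixes N z :: "'a::real_inner"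
  assumes "cball z r \<subseteq> {x. N \<bullet> x + c \<le> 0}" and "norm N = 1" and "r \<ge> 0"
  shows "N \<bullet> z + c \<le> - r"
proof -
  have "z + r *\<^sub>R N \<in> cball z r"
    using assms(2,3) by (simp add: dist_norm)
  then have "N \<bullet> (z + r *\<^sub>R N) + c \<le> 0"
    using assms(1) by blast
  moreover have "N \<bullet> N = 1"
    using assms(2) by (simp add: norm_eq_sqrt_inner)
  ultimately show ?thesis
    by (simp add: inner_add_right)
qed

lemma sum_mult_le_norm_sum_scaleR:
  fixes N :: "'i \<Rightarrow> 'a::real_inner"
  assumes nonneg: "\<And>i. i \<in> I \<Longrightarrow> a i \<ge> 0"
    and bounded_below: "\<And>i. i \<in> I \<Longrightarrow> a i \<noteq> 0 \<Longrightarrow> N i \<bullet> v \<ge> \<delta>"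
  shows "\<delta> * (\<Sum>i\<in>I. a i) \<le> norm (\<Sum>i\<in>I. a i *\<^sub>R N i) * norm v"
proof -
  have "\<delta> * (\<Sum>i\<in>I. a i) = (\<Sum>i\<in>I. a i * \<delta>)"
    by (simp add: sum_distrib_left mult.commute)
  also have "\<dots> \<le> (\<Sum>i\<in>I. a i * (N i \<bullet> v))"
    using nonneg bounded_below by (intro sum_mono) (metis mult_left_mono mult_zero_left order_refl)
  also have "\<dots> = (\<Sum>i\<in>I. a i *\<^sub>R N i) \<bullet> v"
    by (simp add: inner_sum_left)
  also have "\<dots> \<le> norm (\<Sum>i\<in>I. a i *\<^sub>R N i) * norm v"
    by (rule norm_cauchy_schwarz)
  finally show ?thesis .
qed

lemma nearly_active_normals_sum_le:
  fixes N :: "'i \<Rightarrow> 'a::real_inner"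
  assumes ball: "cball z r \<subseteq> {y. \<forall>i\<in>I. N i \<bullet> y + c i \<le> 0}" and "r \<ge> 0"
    and unit: "\<And>i. i \<in> I \<Longrightarrow> norm (N i) = 1"
    and nonneg: "\<And>i. i \<in> I \<Longrightarrow> a i \<ge> 0"
    and nearly_active: "\<And>i. i \<in> I \<Longrightarrow> a i \<noteq> 0 \<Longrightarrow> N i \<bullet> x + c i \<ge> - r / 2"
  shows "r / 2 * (\<Sum>i\<in>I. a i) \<le> norm (\<Sum>i\<in>I. a i *\<^sub>R N i) * norm (x - z)"
proof (rule sum_mult_le_norm_sum_scaleR)
  fix i assume i: "i \<in> I" and "a i \<noteq> 0"
  have "cball z r \<subseteq> {y. N i \<bullet> y + c i \<le> 0}"
    using ball i by auto
  then have "N i \<bullet> z + c i \<le> - r"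
    using i unit \<open>r \<ge> 0\<close> by (intro inner_le_neg_radius_if_cball_subset_halfspace) auto
  then show "N i \<bullet> (x - z) \<ge> r / 2"
    using nearly_active[OF i \<open>a i \<noteq> 0\<close>] by (simp add: inner_diff_right)
qed (use nonneg in auto)

theorem lemma2p3:
  fixes u :: "nat \<Rightarrow> 'a::euclidean_space \<Rightarrow> real"
    and N :: "nat \<Rightarrow> 'a" and b :: "nat \<Rightarrow> real" and q :: nat
    and \<Omega> :: "'a set"
  assumes dim: "DIM('a) \<ge> 3"
    and affine_u: "\<And>k x. k \<le> q \<Longrightarrow> u k x = N k \<bullet> x + b k"
    and unit_N: "\<And>k. k \<le> q \<Longrightarrow> norm (N k) = 1"
    and Omega_def: "\<Omega> = {x. \<forall>m\<le>q. u m x \<le> 0}"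
    and compact: "compact \<Omega>" and convex: "convex \<Omega>"
    and interior: "interior \<Omega> \<noteq> {}"
    and irredundant: "\<And>k. k \<le> q \<Longrightarrow>
        \<exists>x. u k x > 0 \<and> (\<forall>m\<le>q. m \<noteq> k \<longrightarrow> u m x \<le> 0)"
    and angle: "\<And>j k. j < k \<Longrightarrow> k \<le> q \<Longrightarrow>
        (\<exists>x\<in>\<Omega>. u j x = 0 \<and> u k x = 0) \<Longrightarrow> N j \<bullet> N k \<le> 0"
  shows "\<exists>\<Lambda>::real. \<Lambda> > 1 \<and>
     (\<forall>x\<in>\<Omega>. \<forall>a::nat \<Rightarrow> real.
        (\<forall>i\<le>q. a i \<ge> 0) \<longrightarrow>
        (\<forall>i\<le>q. u i x \<le> -2 / \<Lambda> \<longrightarrow> a i = 0) \<longrightarrow>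
        (\<Sum>i\<le>q. a i) \<le> \<Lambda> * norm (\<Sum>i\<le>q. a i *\<^sub>R N i))"
proof -
  obtain z r where r: "r > 0" and ball: "cball z r \<subseteq> \<Omega>"
    using interior mem_interior_cball by blast
  have halfspaces: "\<Omega> = {y. \<forall>i\<in>{..q}. N i \<bullet> y + b i \<le> 0}"
    using Omega_def affine_u by auto
  obtain D where D: "\<And>x. x \<in> \<Omega> \<Longrightarrow> norm (x - z) \<le> D"
    using compact_imp_bounded[OF compact] by (metis bounded_any_center dist_norm dist_commute)
  have "z \<in> \<Omega>"
    using ball r centre_in_cball[of z r] by (auto simp del: centre_in_cball)
  then have "D \<ge> 0"
    using D[of z] by simp
  define \<Lambda> where "\<Lambda> = 1 + 2 * (2 + D) / r"
  have \<Lambda>: "\<Lambda> > 1" "2 / \<Lambda> \<le> r / 2" "D \<le> \<Lambda> * (r / 2)"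
    using r \<open>D \<ge> 0\<close> by (auto simp: \<Lambda>_def field_simps)
  show ?thesis
  proof (intro exI conjI ballI allI impI)
    fix x and a :: "nat \<Rightarrow> real"
    assume x: "x \<in> \<Omega>" and nonneg: "\<forall>i\<le>q. a i \<ge> 0"
      and inactive: "\<forall>i\<le>q. u i x \<le> -2 / \<Lambda> \<longrightarrow> a i = 0"
    have "N i \<bullet> x + b i \<ge> - r / 2" if "i \<le> q" "a i \<noteq> 0" for i
      using that inactive affine_u \<Lambda>(2) by force
    then have "r / 2 * (\<Sum>i\<le>q. a i) \<le> norm (\<Sum>i\<le>q. a i *\<^sub>R N i) * norm (x - z)"
      using ball r nonneg unit_N unfolding halfspaces
      by (intro nearly_active_normals_sum_le) auto
    also have "\<dots> \<le> norm (\<Sum>i\<le>q. a i *\<^sub>R N i) * (\<Lambda> * (r / 2))"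
      using D[OF x] \<Lambda>(3) by (intro mult_left_mono) auto
    finally show "(\<Sum>i\<le>q. a i) \<le> \<Lambda> * norm (\<Sum>i\<le>q. a i *\<^sub>R N i)"
      using r by (simp add: mult.commute mult.left_commute)
  qed (use \<Lambda> in auto)
qed

end
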